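(* Let $F$ be a distribution on $[0,\infty)$ with unbounded support, with $\hat\gamma\in(0,\infty]$ (so that $\varphi(\hat\gamma)\in(1,\infty]$). If for every fixed $y>0$ $$\liminf_{x\to\infty}\frac{\overline{F}(x-y)}{\overline{F}(x)}\ge e^{\hat\gamma y},$$ then $$\liminf_{x\to\infty}\frac{\overline{F*F}(x)}{\overline{F}(x)}=2\varphi(\hat\gamma).$$
   Context: $\overline{F}(x)=F(x,\infty)$ is the tail of $F$; unbounded support means $\overline{F}(x)>0$ for all $x$. $\varphi(\gamma)=\int_0^\infty e^{\gamma x}F(dx)\in(0,\infty]$, $\hat\gamma=\sup\{\gamma:\varphi(\gamma)<\infty\}\in[0,\infty]$, and $\varphi(\hat\gamma)=\lim_{\gamma\uparrow\hat\gamma}\varphi(\gamma)\in[1,\infty]$. When $\hat\gamma=\infty$, $e^{\hat\gamma y}$ is interpreted as $+\infty$ for $y>0$. *)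

theory Defs
  imports "HOL-Probability.Probability"
begin

definition tail :: "real measure \<Rightarrow> real \<Rightarrow> real" where
  "tail F x = measure F {x<..}"

definition mgf :: "real measure \<Rightarrow> real \<Rightarrow> ennreal" where
  "mgf F \<gamma> = (\<integral>\<^sup>+ x. ennreal (exp (\<gamma> * x)) \<partial>F)"

definition gamma_hat :: "real measure \<Rightarrow> ereal" where
  "gamma_hat F = (SUP \<gamma>\<in>{\<gamma>::real. mgf F \<gamma> < \<infinity>}. ereal \<gamma>)"

text \<open>\<phi>(\<gamma>-hat) = lim_{\<gamma> \<uparrow> \<gamma>-hat} \<phi>(\<gamma>); since \<phi> is nondecreasing (F lives on
  [0,\<infinity>)), this left limit equals the supremum over \<gamma> < \<gamma>-hat.\<close>
definition mgf_hat :: "real measure \<Rightarrow> ennreal" where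
  "mgf_hat F = (SUP \<gamma>\<in>{\<gamma>::real. ereal \<gamma> < gamma_hat F}. mgf F \<gamma>)"

definition exp_ereal :: "ereal \<Rightarrow> real \<Rightarrow> ereal" where
  "exp_ereal g y = (if g = \<infinity> then \<infinity> else ereal (exp (real_of_ereal g * y)))"

end

(*
  Lower bound: for x > 2A the events {X1 > A, X2 <= A, X1 + X2 > x} and its mirror image are
  disjoint, so the tail of F * F is at least 2 * integral over b <= A of tail F (x - b) dF(b).
  Dividing by tail F x and applying Fatou's lemma along x -> infinity, the hypothesis turns the
  integrand into e^(gamma b) for every gamma below gamma-hat; letting A -> infinity and
  gamma -> gamma-hat gives 2 phi(gamma-hat).

  Upper bound (which needs no hypothesis on the ratios): if phi = phi(gamma-hat) is finite, then
  gamma-hat = g is finite and phi(g + s) is infinite for s > 0. Suppose the tail of F * F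
  eventually exceeds (2 phi + eps) times the tail of F. Integrate the increasing function
  psi_n(z) = e^(g z) (e^(s min(z+, n)) - 1): by the layer-cake formula the tail inequality gives
  the integral of psi_n against F * F at least (2 phi + eps) D_n - O(s), where D_n is its
  integral against F, while submultiplicativity of e^(g z) e^(s min(z+, n)) bounds it by
  2 phi D_n + D_n^2. Since D_n increases to infinity in steps of size O(s), some D_n lies in
  (eps/4, eps/2], and the two bounds are incompatible for small s.
*)
theory Submission
  imports Defs
begin

section \<open>Tails and moment generating functions\<close>

lemma tail_convolution:
  assumes "finite_measure M" "finite_measure N"
    and sM: "sets M = sets borel" and sN: "sets N = sets borel"
  shows "ennreal (tail (M \<star> N) x) = (\<integral>\<^sup>+a. ennreal (tail N (x - a)) \<partial>M)"
proof -
  interpret N: finite_measure N by fact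
  have "finite_measure (M \<star> N)" by (rule convolution_finite) (use assms in auto)
  then have "ennreal (tail (M \<star> N) x) = emeasure (M \<star> N) {x<..}"
    by (simp add: tail_def finite_measure.emeasure_eq_measure)
  also have "\<dots> = (\<integral>\<^sup>+a. emeasure N {b. b + a \<in> {x<..}} \<partial>M)"
    by (rule convolution_emeasure)
      (use assms sets_eq_imp_space_eq[OF sM] sets_eq_imp_space_eq[OF sN] in auto)
  also have "\<dots> = (\<integral>\<^sup>+a. ennreal (tail N (x - a)) \<partial>M)"
  proof (rule nn_integral_cong)
    fix a
    have "{b. b + a \<in> {x<..}} = {x - a<..}" by auto
    then show "emeasure N {b. b + a \<in> {x<..}} = ennreal (tail N (x - a))"
      by (simp add: tail_def N.emeasure_eq_measure)
  qed
  finally show ?thesis .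
qed

lemma borel_measurable_tail_shift:
  assumes "finite_measure M" and sM: "sets M = sets borel"
  shows "(\<lambda>b. tail M (x - b)) \<in> borel_measurable borel"
proof (rule borel_measurable_mono)
  interpret finite_measure M by fact
  show "mono (\<lambda>b. tail M (x - b))"
    unfolding mono_def tail_def by (auto intro!: finite_measure_mono simp: sM)
qed

text \<open>Once \<open>x > 2 A\<close>, the pairs with \<open>b \<le> A\<close> and those with \<open>a \<le> A\<close> are disjoint parts of
  \<open>{a + b > x}\<close>; Fubini makes the two contributions equal.\<close>
lemma tail_convolution_ge_truncated:
  assumes "finite_measure F" and sF: "sets F = sets borel" and x: "x > 2 * A"
  shows "2 * (\<integral>\<^sup>+b. ennreal (tail F (x - b)) * indicator {..A} b \<partial>F) \<le> ennreal (tail (F \<star> F) x)"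
proof -
  interpret finite_measure F by fact
  interpret pair_sigma_finite F F by unfold_locales
  note [measurable_cong] = sF
  note [measurable] = borel_measurable_tail_shift[OF assms(1) sF]
  define t where "t b = ennreal (tail F (x - b))" for b
  define h where "h a b = indicator {A<..} a * indicator {..A} b * (indicator {x<..} (a + b) :: ennreal)"
    for a b
  have h_meas: "(\<lambda>(a, b). h a b) \<in> borel_measurable (F \<Otimes>\<^sub>M F)"
    unfolding h_def by measurable
  have split: "(\<integral>\<^sup>+b. t b \<partial>F)
      = (\<integral>\<^sup>+b. t b * indicator {..A} b \<partial>F) + (\<integral>\<^sup>+b. t b * indicator {A<..} b \<partial>F)"
    unfolding t_def by (subst nn_integral_add[symmetric])
      (measurable, auto intro!: nn_integral_cong split: split_indicator)
  have inner_a: "(\<integral>\<^sup>+b. h a b \<partial>F) \<le> t a * indicator {A<..} a" for a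
  proof -
    have "(\<integral>\<^sup>+b. h a b \<partial>F) \<le> (\<integral>\<^sup>+b. indicator {A<..} a * indicator {x - a<..} b \<partial>F)"
      by (rule nn_integral_mono) (auto simp: h_def split: split_indicator)
    also have "\<dots> = t a * indicator {A<..} a"
      by (subst nn_integral_cmult_indicator)
        (simp_all add: sF t_def tail_def emeasure_eq_measure mult.commute)
    finally show ?thesis .
  qed
  have inner_b: "(\<integral>\<^sup>+a. h a b \<partial>F) = t b * indicator {..A} b" for b
  proof -
    have "(\<integral>\<^sup>+a. h a b \<partial>F) = (\<integral>\<^sup>+a. indicator {..A} b * indicator {x - b<..} a \<partial>F)"
      using x by (intro nn_integral_cong) (auto simp: h_def split: split_indicator)
    also have "\<dots> = t b * indicator {..A} b"
      by (subst nn_integral_cmult_indicator)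
        (simp_all add: sF t_def tail_def emeasure_eq_measure mult.commute)
    finally show ?thesis .
  qed
  have "(\<integral>\<^sup>+b. t b * indicator {..A} b \<partial>F) = (\<integral>\<^sup>+b. \<integral>\<^sup>+a. h a b \<partial>F \<partial>F)"
    by (simp add: inner_b)
  also have "\<dots> = (\<integral>\<^sup>+a. \<integral>\<^sup>+b. h a b \<partial>F \<partial>F)"
    by (rule Fubini'[OF h_meas])
  also have "\<dots> \<le> (\<integral>\<^sup>+a. t a * indicator {A<..} a \<partial>F)"
    by (rule nn_integral_mono) (rule inner_a)
  finally have "2 * (\<integral>\<^sup>+b. t b * indicator {..A} b \<partial>F) \<le> (\<integral>\<^sup>+b. t b \<partial>F)"
    unfolding split mult_2 by (rule add_left_mono)
  also have "\<dots> = ennreal (tail (F \<star> F) x)"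
    unfolding t_def by (rule tail_convolution[OF assms(1,1) sF sF, symmetric])
  finally show ?thesis unfolding t_def .
qed

lemma nn_integral_convolution_le_of_submult:
  assumes "finite_measure M" "finite_measure N"
    and [measurable_cong]: "sets M = sets borel" "sets N = sets borel"
    and [measurable]: "f \<in> borel_measurable borel"
    and submult: "\<And>x y. f (x + y) \<le> f x * f y" and nonneg: "\<And>x. 0 \<le> f x"
  shows "(\<integral>\<^sup>+z. ennreal (f z) \<partial>(M \<star> N)) \<le> (\<integral>\<^sup>+z. ennreal (f z) \<partial>M) * (\<integral>\<^sup>+z. ennreal (f z) \<partial>N)"
proof -
  have "(\<integral>\<^sup>+z. ennreal (f z) \<partial>(M \<star> N)) = (\<integral>\<^sup>+x. \<integral>\<^sup>+y. ennreal (f (x + y)) \<partial>N \<partial>M)"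
    by (rule nn_integral_convolution) (use assms in auto)
  also have "\<dots> \<le> (\<integral>\<^sup>+x. \<integral>\<^sup>+y. ennreal (f x) * ennreal (f y) \<partial>N \<partial>M)"
    by (intro nn_integral_mono)
      (use submult nonneg in \<open>auto simp: ennreal_mult[symmetric] intro!: ennreal_leI\<close>)
  also have "\<dots> = (\<integral>\<^sup>+x. ennreal (f x) * (\<integral>\<^sup>+y. ennreal (f y) \<partial>N) \<partial>M)"
    by (intro nn_integral_cong nn_integral_cmult) measurable
  also have "\<dots> = (\<integral>\<^sup>+z. ennreal (f z) \<partial>M) * (\<integral>\<^sup>+z. ennreal (f z) \<partial>N)"
    by (rule nn_integral_multc) measurable
  finally show ?thesis .
qed

lemma mgf_convolution:
  assumes "finite_measure M" "finite_measure N"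
    and [measurable_cong]: "sets M = sets borel" "sets N = sets borel"
  shows "mgf (M \<star> N) g = mgf M g * mgf N g"
proof -
  have "(\<integral>\<^sup>+z. ennreal (exp (g * z)) \<partial>(M \<star> N)) = (\<integral>\<^sup>+x. \<integral>\<^sup>+y. ennreal (exp (g * (x + y))) \<partial>N \<partial>M)"
    by (rule nn_integral_convolution) (use assms in auto)
  also have "\<dots> = (\<integral>\<^sup>+x. \<integral>\<^sup>+y. ennreal (exp (g * x)) * ennreal (exp (g * y)) \<partial>N \<partial>M)"
    by (simp add: ennreal_mult[symmetric] distrib_left exp_add)
  also have "\<dots> = (\<integral>\<^sup>+x. ennreal (exp (g * x)) * (\<integral>\<^sup>+y. ennreal (exp (g * y)) \<partial>N) \<partial>M)"
    by (intro nn_integral_cong nn_integral_cmult) measurable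
  also have "\<dots> = (\<integral>\<^sup>+z. ennreal (exp (g * z)) \<partial>M) * (\<integral>\<^sup>+z. ennreal (exp (g * z)) \<partial>N)"
    by (rule nn_integral_multc) measurable
  finally show ?thesis
    unfolding mgf_def .
qed

lemma ereal_le_gamma_hat: "mgf F \<gamma> < \<top> \<Longrightarrow> ereal \<gamma> \<le> gamma_hat F"
  unfolding gamma_hat_def by (rule SUP_upper) simp

lemma mgf_le_mgf_hat: "ereal \<gamma> < gamma_hat F \<Longrightarrow> mgf F \<gamma> \<le> mgf_hat F"
  unfolding mgf_hat_def by (rule SUP_upper) simp

lemma mgf_ge_exp_tail:
  assumes "finite_measure F" "sets F = sets borel" "0 \<le> \<gamma>"
  shows "ennreal (exp \<gamma> * tail F 1) \<le> mgf F \<gamma>"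
proof -
  interpret finite_measure F by fact
  have "ennreal (exp \<gamma> * tail F 1) = (\<integral>\<^sup>+z. ennreal (exp \<gamma>) * indicator {1<..} z \<partial>F)"
    using assms(2)
    by (subst nn_integral_cmult_indicator) (auto simp: tail_def emeasure_eq_measure ennreal_mult)
  also have "\<dots> \<le> mgf F \<gamma>"
    unfolding mgf_def
  proof (rule nn_integral_mono)
    fix z
    show "ennreal (exp \<gamma>) * indicator {1<..} z \<le> ennreal (exp (\<gamma> * z))"
      using assms(3) mult_left_mono[of 1 z \<gamma>] by (cases "1 < z") (auto intro: ennreal_leI)
  qed
  finally show ?thesis .
qed

lemma mgf_hat_eq_top_if_gamma_hat_infinite:
  assumes "finite_measure F" "sets F = sets borel" and pos: "tail F 1 > 0"
    and inf: "gamma_hat F = \<infinity>"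
  shows "mgf_hat F = \<top>"
proof -
  have "of_nat n \<le> mgf_hat F" for n
  proof -
    define \<gamma> where "\<gamma> = ln (real n / tail F 1 + 1)"
    have "0 \<le> real n / tail F 1" using pos by simp
    then have "0 \<le> \<gamma>" and "exp \<gamma> = real n / tail F 1 + 1"
      by (simp_all add: \<gamma>_def)
    then have "of_nat n \<le> ennreal (exp \<gamma> * tail F 1)"
      using pos by (simp add: field_simps ennreal_of_nat_eq_real_of_nat ennreal_leI)
    also have "\<dots> \<le> mgf F \<gamma>" by (rule mgf_ge_exp_tail) fact+
    also have "\<dots> \<le> mgf_hat F" using inf by (intro mgf_le_mgf_hat) simp
    finally show ?thesis .
  qed
  then have "(SUP n. of_nat n) \<le> mgf_hat F" by (intro SUP_least) auto
  then show ?thesis unfolding ennreal_SUP_of_nat_eq_top by (simp add: top_unique)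
qed

lemma mgf_gamma_hat_le_mgf_hat:
  assumes sF: "sets F = sets borel" and gh: "gamma_hat F = ereal g"
  shows "mgf F g \<le> mgf_hat F"
proof -
  note [measurable_cong] = sF
  define f where "f k z = ennreal (exp ((g - inverse (real (Suc k))) * z))" for k z
  have lim: "liminf (\<lambda>k. f k z) = ennreal (exp (g * z))" for z
  proof (rule lim_imp_Liminf)
    have "(\<lambda>k. g - inverse (real (Suc k))) \<longlonglongrightarrow> g"
      using tendsto_diff[OF tendsto_const LIMSEQ_inverse_real_of_nat, of g] by simp
    then show "(\<lambda>k. f k z) \<longlonglongrightarrow> ennreal (exp (g * z))"
      unfolding f_def by (intro tendsto_ennrealI tendsto_intros)
  qed simp
  have "mgf F g = (\<integral>\<^sup>+z. liminf (\<lambda>k. f k z) \<partial>F)" unfolding mgf_def lim ..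
  also have "\<dots> \<le> liminf (\<lambda>k. \<integral>\<^sup>+z. f k z \<partial>F)"
    by (rule nn_integral_liminf) (simp add: f_def)
  also have "\<dots> \<le> mgf_hat F"
  proof (rule Liminf_le)
    have "(\<integral>\<^sup>+z. f k z \<partial>F) \<le> mgf_hat F" for k
      unfolding f_def mgf_def[symmetric] using gh by (intro mgf_le_mgf_hat) simp
    then show "\<forall>\<^sub>F k in sequentially. (\<integral>\<^sup>+z. f k z \<partial>F) \<le> mgf_hat F"
      by simp
  qed simp
  finally show ?thesis .
qed

lemma mgf_eq_SUP_truncated:
  assumes [measurable_cong]: "sets F = sets borel"
  shows "mgf F \<gamma> = (SUP n. \<integral>\<^sup>+b. ennreal (exp (\<gamma> * b)) * indicator {..real n} b \<partial>F)"
proof -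
  have inc: "incseq (\<lambda>n b. ennreal (exp (\<gamma> * b)) * indicator {..real n} b)"
    by (intro incseq_SucI le_funI mult_left_mono) (auto split: split_indicator)
  have "(SUP n. ennreal (exp (\<gamma> * b)) * indicator {..real n} b) = ennreal (exp (\<gamma> * b))" for b
  proof (rule antisym)
    show "(SUP n. ennreal (exp (\<gamma> * b)) * indicator {..real n} b) \<le> ennreal (exp (\<gamma> * b))"
      by (intro SUP_least) (simp split: split_indicator)
    obtain n :: nat where "b \<le> real n" using real_arch_simple by blast
    then show "ennreal (exp (\<gamma> * b)) \<le> (SUP n. ennreal (exp (\<gamma> * b)) * indicator {..real n} b)"
      by (intro SUP_upper2[of n]) auto
  qed
  then have "mgf F \<gamma> = (\<integral>\<^sup>+b. (SUP n. ennreal (exp (\<gamma> * b)) * indicator {..real n} b) \<partial>F)"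
    unfolding mgf_def by simp
  also have "\<dots> = (SUP n. \<integral>\<^sup>+b. ennreal (exp (\<gamma> * b)) * indicator {..real n} b \<partial>F)"
    by (rule nn_integral_monotone_convergence_SUP[OF inc]) measurable
  finally show ?thesis .
qed

lemma exp_le_exp_ereal: "ereal \<gamma> < g \<Longrightarrow> 0 < y \<Longrightarrow> ereal (exp (\<gamma> * y)) \<le> exp_ereal g y"
  by (cases g) (auto simp: exp_ereal_def)

section \<open>The lower bound\<close>

lemma sequentially_imp_eventually_at_top:
  fixes P :: "real \<Rightarrow> bool"
  assumes "\<And>xs. filterlim xs at_top sequentially \<Longrightarrow> eventually (\<lambda>n. P (xs n)) sequentially"
  shows "eventually P at_top"
proof (rule ccontr)
  assume "\<not> eventually P at_top"
  then have "\<forall>n::nat. \<exists>x. real n \<le> x \<and> \<not> P x"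
    unfolding eventually_at_top_linorder by (meson order.refl)
  then obtain xs where xs: "\<And>n. real n \<le> xs n \<and> \<not> P (xs n)" by metis
  have "filterlim xs at_top sequentially"
    by (rule filterlim_at_top_mono[OF filterlim_real_sequentially]) (use xs in auto)
  then obtain n where "P (xs n)"
    using assms eventually_sequentially by (metis order.refl)
  with xs show False by blast
qed

lemma liminf_tail_ratio_ge_exp:
  assumes pos: "\<And>x. 0 < tail F x"
    and hyp: "\<And>y. 0 < y \<Longrightarrow> ereal (exp (\<gamma> * y)) \<le> Liminf at_top (\<lambda>x. ereal (tail F (x - y) / tail F x))"
    and xs: "filterlim xs at_top sequentially" and b: "0 \<le> b"
  shows "ennreal (exp (\<gamma> * b)) \<le> liminf (\<lambda>n. ennreal (tail F (xs n - b) / tail F (xs n)))"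
proof (cases "b = 0")
  case True
  then have "(\<lambda>n. ennreal (tail F (xs n - b) / tail F (xs n))) = (\<lambda>n. 1)"
    using pos by (auto simp: less_imp_neq[symmetric])
  then show ?thesis using True by (simp add: Liminf_const)
next
  case False
  with b have "0 < b" by simp
  show ?thesis
  proof (subst le_Liminf_iff, intro allI impI)
    fix y :: ennreal assume y: "y < ennreal (exp (\<gamma> * b))"
    then obtain y0 where y0: "y = ennreal y0" "0 \<le> y0" "y0 < exp (\<gamma> * b)"
      by (cases y) (auto simp: ennreal_less_iff)
    have "ereal y0 < Liminf at_top (\<lambda>x. ereal (tail F (x - b) / tail F x))"
      using y0(3) hyp[OF \<open>0 < b\<close>] by (metis less_ereal.simps(1) order.strict_trans2)
    then have "eventually (\<lambda>x. ereal y0 < ereal (tail F (x - b) / tail F x)) at_top"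
      by (rule less_LiminfD)
    then have "eventually (\<lambda>x. y0 < tail F (x - b) / tail F x) at_top"
      by simp
    then have "eventually (\<lambda>n. y0 < tail F (xs n - b) / tail F (xs n)) sequentially"
      using xs by (rule eventually_compose_filterlim)
    then show "eventually (\<lambda>n. y < ennreal (tail F (xs n - b) / tail F (xs n))) sequentially"
      by eventually_elim (use y0 in \<open>auto intro!: ennreal_lessI\<close>)
  qed
qed

lemma eventually_convolution_tail_ratio_gt:
  assumes F: "finite_measure F" and sF: "sets F = sets borel" and AE0: "AE x in F. 0 \<le> x"
    and pos: "\<And>x. 0 < tail F x"
    and hyp: "\<And>y. 0 < y \<Longrightarrow> ereal (exp (\<gamma> * y)) \<le> Liminf at_top (\<lambda>x. ereal (tail F (x - y) / tail F x))"
    and c: "ennreal c < (\<integral>\<^sup>+b. ennreal (exp (\<gamma> * b)) * indicator {..A} b \<partial>F)"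
  shows "eventually (\<lambda>x. 2 * c < tail (F \<star> F) x / tail F x) at_top"
proof (rule sequentially_imp_eventually_at_top)
  fix xs :: "nat \<Rightarrow> real" assume xs: "filterlim xs at_top sequentially"
  note [measurable_cong] = sF
  note [measurable] = borel_measurable_tail_shift[OF F sF]
  define f where "f n b = ennreal (tail F (xs n - b) / tail F (xs n)) * indicator {..A} b" for n b
  have "AE b in F. ennreal (exp (\<gamma> * b)) * indicator {..A} b \<le> liminf (\<lambda>n. f n b)"
    using AE0
  proof eventually_elim
    case (elim b)
    then show ?case
      using liminf_tail_ratio_ge_exp[OF pos hyp xs elim] by (simp add: f_def split: split_indicator)
  qed
  then have "ennreal c < (\<integral>\<^sup>+b. liminf (\<lambda>n. f n b) \<partial>F)"
    using c by (simp add: order.strict_trans2 nn_integral_mono_AE)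
  also have "\<dots> \<le> liminf (\<lambda>n. \<integral>\<^sup>+b. f n b \<partial>F)"
    by (rule nn_integral_liminf) (simp add: f_def)
  finally have "eventually (\<lambda>n. ennreal c < (\<integral>\<^sup>+b. f n b \<partial>F)) sequentially"
    by (rule less_LiminfD)
  moreover have "eventually (\<lambda>n. 2 * A < xs n) sequentially"
    by (rule eventually_compose_filterlim[OF eventually_gt_at_top xs])
  ultimately show "eventually (\<lambda>n. 2 * c < tail (F \<star> F) (xs n) / tail F (xs n)) sequentially"
  proof eventually_elim
    case (elim n)
    define T where "T = tail F (xs n)"
    have "0 < T" using pos by (simp add: T_def)
    have "f n b = ennreal (tail F (xs n - b)) * indicator {..A} b * ennreal (1 / T)" for b
      using \<open>0 < T\<close> by (simp add: f_def T_def divide_inverse ennreal_mult'' mult_ac tail_def)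
    then have "(\<integral>\<^sup>+b. f n b \<partial>F)
        = (\<integral>\<^sup>+b. ennreal (tail F (xs n - b)) * indicator {..A} b \<partial>F) * ennreal (1 / T)"
      by (simp only:) (rule nn_integral_multc, measurable)
    then have "2 * ennreal c < 2 * (\<integral>\<^sup>+b. ennreal (tail F (xs n - b)) * indicator {..A} b \<partial>F) * ennreal (1 / T)"
      using elim(1) by (metis ennreal_mult_strict_left_mono mult.assoc ennreal_numeral_less_top zero_less_numeral)
    also have "\<dots> \<le> ennreal (tail (F \<star> F) (xs n)) * ennreal (1 / T)"
      by (rule mult_right_mono[OF tail_convolution_ge_truncated[OF F sF elim(2)]]) simp
    also have "\<dots> = ennreal (tail (F \<star> F) (xs n) / T)"
      using \<open>0 < T\<close> by (simp add: divide_inverse ennreal_mult'')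
    finally have "ennreal (2 * c) < ennreal (tail (F \<star> F) (xs n) / T)"
      by (simp add: ennreal_mult')
    then show ?case
      unfolding T_def by (cases "0 \<le> c") (auto simp: ennreal_less_iff ennreal_neg)
  qed
qed

lemma Liminf_convolution_tail_ratio_ge:
  assumes F: "finite_measure F" and sF: "sets F = sets borel" and AE0: "AE x in F. 0 \<le> x"
    and pos: "\<And>x. 0 < tail F x"
    and hyp: "\<And>y. 0 < y \<Longrightarrow> exp_ereal (gamma_hat F) y \<le> Liminf at_top (\<lambda>x. ereal (tail F (x - y) / tail F x))"
  shows "2 * enn2ereal (mgf_hat F) \<le> Liminf at_top (\<lambda>x. ereal (tail (F \<star> F) x / tail F x))"
proof (subst le_Liminf_iff, intro allI impI)
  fix y :: ereal assume y: "y < 2 * enn2ereal (mgf_hat F)"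
  have ratio_nonneg: "0 \<le> tail (F \<star> F) x / tail F x" for x
    using pos[of x] by (simp add: tail_def)
  show "eventually (\<lambda>x. y < ereal (tail (F \<star> F) x / tail F x)) at_top"
  proof (cases "y < 0")
    case True
    then show ?thesis using ratio_nonneg by (auto intro!: always_eventually order.strict_trans2[of y 0])
  next
    case False
    with y obtain r where "y = ereal r" "0 \<le> r" by (cases y) auto
    define c where "c = r / 2"
    have y_eq: "y = ereal (2 * c)" and "0 \<le> c"
      using \<open>y = ereal r\<close> \<open>0 \<le> r\<close> by (simp_all add: c_def)
    have "ennreal c < mgf_hat F"
      using y \<open>0 \<le> c\<close> unfolding y_eq by (cases "mgf_hat F") (auto simp: ennreal_less_iff)
    then obtain \<gamma> where \<gamma>: "ereal \<gamma> < gamma_hat F" and "ennreal c < mgf F \<gamma>"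
      unfolding mgf_hat_def less_SUP_iff by auto
    then obtain n :: nat where "ennreal c < (\<integral>\<^sup>+b. ennreal (exp (\<gamma> * b)) * indicator {..real n} b \<partial>F)"
      unfolding mgf_eq_SUP_truncated[OF sF] less_SUP_iff by auto
    then have "eventually (\<lambda>x. 2 * c < tail (F \<star> F) x / tail F x) at_top"
      using exp_le_exp_ereal[OF \<gamma>] hyp
      by (intro eventually_convolution_tail_ratio_gt[OF F sF AE0 pos]) (blast intro: order.trans)
    then show ?thesis by eventually_elim (simp add: y_eq)
  qed
qed

section \<open>The upper bound\<close>

lemma nn_integral_layer_cake:
  fixes G :: "real \<Rightarrow> real"
  assumes "finite_measure M" and [measurable_cong]: "sets M = sets borel"
    and [measurable]: "G \<in> borel_measurable borel" and G_nonneg: "\<And>z. 0 \<le> G z"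
  shows "(\<integral>\<^sup>+z. ennreal (G z) \<partial>M) = (\<integral>\<^sup>+t. (\<integral>\<^sup>+z. indicator {0..<G z} t \<partial>M) \<partial>lborel)"
proof -
  interpret finite_measure M by fact
  interpret pair_sigma_finite M lborel by unfold_locales
  have "(\<lambda>(z, t). indicator {0..<G z} t :: ennreal) \<in> borel_measurable (M \<Otimes>\<^sub>M lborel)"
    by (simp add: indicator_def)
  then have "(\<integral>\<^sup>+z. (\<integral>\<^sup>+t. indicator {0..<G z} t \<partial>lborel) \<partial>M)
      = (\<integral>\<^sup>+t. (\<integral>\<^sup>+z. indicator {0..<G z} t \<partial>M) \<partial>lborel)"
    using Fubini'[of "\<lambda>z t. indicator {0..<G z} t"] by simp
  then show ?thesis
    using G_nonneg by (simp add: emeasure_lborel_Ico)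
qed

lemma nn_integral_cmult_le_of_superlevel_sets:
  fixes G :: "real \<Rightarrow> real"
  assumes "finite_measure M" and [measurable_cong]: "sets M = sets borel"
    and "finite_measure N" and [measurable_cong]: "sets N = sets borel"
    and [measurable]: "G \<in> borel_measurable borel" and G_nonneg: "\<And>z. 0 \<le> G z"
    and superlevel: "\<And>t. 0 \<le> t \<Longrightarrow> ennreal K * emeasure N {z. t < G z} \<le> emeasure M {z. t < G z}"
  shows "ennreal K * (\<integral>\<^sup>+z. ennreal (G z) \<partial>N) \<le> (\<integral>\<^sup>+z. ennreal (G z) \<partial>M)"
proof -
  interpret N: finite_measure N by fact
  have "(\<lambda>(t, z). indicator {0..<G z} t :: ennreal) \<in> borel_measurable (lborel \<Otimes>\<^sub>M N)"
    by (simp add: indicator_def)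
  then have [measurable]: "(\<lambda>t. \<integral>\<^sup>+z. indicator {0..<G z} t \<partial>N) \<in> borel_measurable lborel"
    using N.borel_measurable_nn_integral[of "\<lambda>t z. indicator {0..<G z} t"] by simp
  have inner: "(\<integral>\<^sup>+z. indicator {0..<G z} t \<partial>L) = indicator {0..} t * emeasure L {z. t < G z}"
    if "sets L = sets borel" for L :: "real measure" and t
  proof -
    have "(\<integral>\<^sup>+z. indicator {0..<G z} t \<partial>L) = (\<integral>\<^sup>+z. indicator {0..} t * indicator {z. t < G z} z \<partial>L)"
      by (rule nn_integral_cong) (simp split: split_indicator)
    also have "\<dots> = indicator {0..} t * emeasure L {z. t < G z}"
      by (rule nn_integral_cmult_indicator) (use that in simp)
    finally show ?thesis .
  qed
  have "ennreal K * (\<integral>\<^sup>+z. ennreal (G z) \<partial>N)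
      = (\<integral>\<^sup>+t. ennreal K * (\<integral>\<^sup>+z. indicator {0..<G z} t \<partial>N) \<partial>lborel)"
    unfolding nn_integral_layer_cake[OF assms(3,4,5) G_nonneg] by (rule nn_integral_cmult[symmetric]) simp
  also have "\<dots> \<le> (\<integral>\<^sup>+t. (\<integral>\<^sup>+z. indicator {0..<G z} t \<partial>M) \<partial>lborel)"
    using superlevel
    by (intro nn_integral_mono) (auto simp: inner assms(2,4) mult.left_commute split: split_indicator)
  also have "\<dots> = (\<integral>\<^sup>+z. ennreal (G z) \<partial>M)"
    by (rule nn_integral_layer_cake[symmetric]) fact+
  finally show ?thesis .
qed

lemma superlevel_set_eq_greaterThan:
  fixes \<psi> :: "real \<Rightarrow> real"
  assumes mono: "mono \<psi>" and strict: "\<And>a b. c \<le> a \<Longrightarrow> a < b \<Longrightarrow> \<psi> a < \<psi> b"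
    and cont: "continuous_on UNIV \<psi>" and "c \<le> b" "\<psi> c + t \<le> \<psi> b" "0 \<le> t"
  obtains q where "c \<le> q" "{z. t < max 0 (\<psi> z - \<psi> c)} = {q<..}"
proof -
  obtain q where q: "c \<le> q" "\<psi> q = \<psi> c + t"
    using IVT'[of \<psi> c "\<psi> c + t" b] assms continuous_on_subset[OF cont] by auto
  have "{z. t < max 0 (\<psi> z - \<psi> c)} = {q<..}"
  proof (intro set_eqI iffI)
    fix z assume "z \<in> {z. t < max 0 (\<psi> z - \<psi> c)}"
    then have "\<psi> q < \<psi> z" using q \<open>0 \<le> t\<close> by auto
    then show "z \<in> {q<..}" using mono unfolding mono_def by (meson greaterThan_iff not_le)
  next
    fix z assume "z \<in> {q<..}"
    then have "\<psi> q < \<psi> z" using strict[OF q(1)] by auto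
    then show "z \<in> {z. t < max 0 (\<psi> z - \<psi> c)}" using q by auto
  qed
  with q that show ?thesis by blast
qed

lemma ex_crossing:
  fixes D :: "nat \<Rightarrow> 'a::linorder"
  assumes "D 0 \<le> a" "a < D N" and step: "\<And>n. D n \<le> a \<Longrightarrow> D (Suc n) \<le> b"
  shows "\<exists>n. a < D n \<and> D n \<le> b"
proof -
  define n where "n = (LEAST n. a < D n)"
  have "a < D n" unfolding n_def by (rule LeastI[of _ N]) fact
  with assms(1) obtain m where m: "n = Suc m"
    by (cases n) auto
  then have "D m \<le> a" using not_less_Least[of m "\<lambda>n. a < D n"] by (simp add: n_def)
  with \<open>a < D n\<close> m step show ?thesis by blast
qed

text \<open>\<open>tilt_excess g s n\<close> is the function \<open>\<psi>\<^sub>n\<close> of the proof idea; truncating the extra rate \<open>s\<close>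
  at \<open>n\<close> keeps its integral finite whenever \<open>\<phi>(g)\<close> is.\<close>
definition tilt :: "real \<Rightarrow> real \<Rightarrow> nat \<Rightarrow> real \<Rightarrow> real" where
  "tilt g s n z = exp (g * z) * exp (s * min (max z 0) (real n))"

definition tilt_excess :: "real \<Rightarrow> real \<Rightarrow> nat \<Rightarrow> real \<Rightarrow> real" where
  "tilt_excess g s n z = exp (g * z) * (exp (s * min (max z 0) (real n)) - 1)"

lemma tilt_eq: "tilt g s n z = exp (g * z) + tilt_excess g s n z"
  unfolding tilt_def tilt_excess_def by (simp add: algebra_simps)

lemma tilt_nonneg: "0 \<le> tilt g s n z"
  unfolding tilt_def by simp

lemma tilt_excess_nonneg: "0 \<le> s \<Longrightarrow> 0 \<le> tilt_excess g s n z"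
  unfolding tilt_excess_def by simp

lemma borel_measurable_tilt [measurable]: "tilt g s n \<in> borel_measurable borel"
  unfolding tilt_def by measurable

lemma borel_measurable_tilt_excess [measurable]: "tilt_excess g s n \<in> borel_measurable borel"
  unfolding tilt_excess_def by measurable

lemma continuous_on_tilt_excess: "continuous_on UNIV (tilt_excess g s n)"
  unfolding tilt_excess_def by (intro continuous_intros)

lemma tilt_submult:
  assumes "0 \<le> s"
  shows "tilt g s n (x + y) \<le> tilt g s n x * tilt g s n y"
proof -
  have "min (max (x + y) 0) (real n) \<le> min (max x 0) (real n) + min (max y 0) (real n)"
    by linarith
  then have "s * min (max (x + y) 0) (real n) \<le> s * min (max x 0) (real n) + s * min (max y 0) (real n)"
    using assms by (metis distrib_left mult_left_mono)
  then show ?thesis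
    unfolding tilt_def by (simp add: exp_add[symmetric] distrib_left algebra_simps)
qed

lemma tilt_Suc_le:
  assumes "0 \<le> s"
  shows "tilt g s (Suc n) z \<le> exp s * tilt g s n z"
proof -
  have "min (max z 0) (real (Suc n)) \<le> 1 + min (max z 0) (real n)"
    by auto
  then have "s * min (max z 0) (real (Suc n)) \<le> s + s * min (max z 0) (real n)"
    using assms by (metis distrib_left mult.right_neutral mult_left_mono)
  then show ?thesis
    unfolding tilt_def by (simp add: exp_add[symmetric] mult.left_commute)
qed

lemma tilt_excess_le: "0 \<le> s \<Longrightarrow> tilt_excess g s n z \<le> (exp (s * real n) - 1) * exp (g * z)"
  unfolding tilt_excess_def by (simp add: mult.commute mult_left_mono)

lemma tilt_excess_mono_index: "0 \<le> s \<Longrightarrow> n \<le> m \<Longrightarrow> tilt_excess g s n z \<le> tilt_excess g s m z"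
  unfolding tilt_excess_def by (simp add: mult_left_mono)

lemma mono_tilt_excess:
  assumes "0 \<le> g" "0 \<le> s"
  shows "mono (tilt_excess g s n)"
proof (rule monoI)
  fix a b :: real assume "a \<le> b"
  then have "exp (s * min (max a 0) (real n)) \<le> exp (s * min (max b 0) (real n))"
    and "exp (g * a) \<le> exp (g * b)"
    using assms by (auto intro!: mult_left_mono)
  then show "tilt_excess g s n a \<le> tilt_excess g s n b"
    using assms unfolding tilt_excess_def by (intro mult_mono) auto
qed

lemma tilt_excess_strict_mono:
  assumes "0 < g" "0 < s" "1 \<le> n" "1 \<le> x0" "x0 \<le> a" "a < b"
  shows "tilt_excess g s n a < tilt_excess g s n b"
proof -
  have "1 \<le> min (max a 0) (real n)" using assms by auto
  then have "0 < exp (s * min (max a 0) (real n)) - 1"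
    using \<open>0 < s\<close> by (simp add: order.strict_trans2)
  moreover have "exp (g * a) < exp (g * b)" using assms by simp
  ultimately have "tilt_excess g s n a < exp (g * b) * (exp (s * min (max a 0) (real n)) - 1)"
    unfolding tilt_excess_def by (intro mult_strict_right_mono)
  also have "\<dots> \<le> tilt_excess g s n b"
    unfolding tilt_excess_def using assms by (intro mult_left_mono) (auto intro!: mult_left_mono)
  finally show ?thesis .
qed

lemma tilt_excess_ge:
  assumes "0 < g" "0 < s" "1 \<le> n" "1 \<le> b"
  shows "g * b * s \<le> tilt_excess g s n b"
proof -
  have "s \<le> s * min (max b 0) (real n)" using assms by simp
  then have "exp s \<le> exp (s * min (max b 0) (real n))"
    by simp
  then have "s \<le> exp (s * min (max b 0) (real n)) - 1"
    using exp_ge_add_one_self[of s] by linarith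
  moreover have "g * b \<le> exp (g * b)"
    using exp_ge_add_one_self[of "g * b"] by linarith
  ultimately show ?thesis
    unfolding tilt_excess_def using assms by (intro mult_mono) auto
qed

lemma nn_integral_tilt:
  assumes [measurable_cong]: "sets M = sets borel" and "0 \<le> s"
  shows "(\<integral>\<^sup>+z. ennreal (tilt g s n z) \<partial>M) = mgf M g + (\<integral>\<^sup>+z. ennreal (tilt_excess g s n z) \<partial>M)"
  unfolding mgf_def tilt_eq
  by (subst nn_integral_add[symmetric]) (use assms(2) in \<open>auto simp: tilt_excess_nonneg\<close>)

lemma nn_integral_tilt_excess_less_top:
  assumes [measurable_cong]: "sets M = sets borel" and "0 \<le> s" and "mgf M g < \<top>"
  shows "(\<integral>\<^sup>+z. ennreal (tilt_excess g s n z) \<partial>M) < \<top>"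
proof -
  have "(\<integral>\<^sup>+z. ennreal (tilt_excess g s n z) \<partial>M)
      \<le> (\<integral>\<^sup>+z. ennreal (exp (s * real n) - 1) * ennreal (exp (g * z)) \<partial>M)"
    using assms(2)
    by (intro nn_integral_mono) (simp add: tilt_excess_le ennreal_mult''[symmetric] ennreal_leI)
  also have "\<dots> = ennreal (exp (s * real n) - 1) * mgf M g"
    unfolding mgf_def by (rule nn_integral_cmult) measurable
  also have "\<dots> < \<top>"
    using assms(3) by (simp add: ennreal_mult_less_top)
  finally show ?thesis .
qed

lemma nn_integral_tilt_excess_Suc_le:
  assumes [measurable_cong]: "sets M = sets borel" and "0 \<le> s"
  shows "(\<integral>\<^sup>+z. ennreal (tilt_excess g s (Suc n) z) \<partial>M)
    \<le> (\<integral>\<^sup>+z. ennreal (tilt_excess g s n z) \<partial>M)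
      + ennreal (exp s - 1) * (mgf M g + (\<integral>\<^sup>+z. ennreal (tilt_excess g s n z) \<partial>M))"
proof -
  have "tilt_excess g s (Suc n) z \<le> tilt_excess g s n z + (exp s - 1) * tilt g s n z" for z
  proof -
    have "exp (g * z) + tilt_excess g s (Suc n) z \<le> exp s * (exp (g * z) + tilt_excess g s n z)"
      using tilt_Suc_le[OF assms(2), of g n z] unfolding tilt_eq .
    then show ?thesis
      unfolding tilt_eq by (simp add: algebra_simps)
  qed
  then have "ennreal (tilt_excess g s (Suc n) z)
      \<le> ennreal (tilt_excess g s n z) + ennreal (exp s - 1) * ennreal (tilt g s n z)" for z
    using assms(2)
    by (simp add: ennreal_plus[symmetric] ennreal_mult''[symmetric] tilt_excess_nonneg tilt_nonneg
        ennreal_leI del: ennreal_plus)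
  then have "(\<integral>\<^sup>+z. ennreal (tilt_excess g s (Suc n) z) \<partial>M)
      \<le> (\<integral>\<^sup>+z. ennreal (tilt_excess g s n z) + ennreal (exp s - 1) * ennreal (tilt g s n z) \<partial>M)"
    by (rule nn_integral_mono)
  also have "\<dots> = (\<integral>\<^sup>+z. ennreal (tilt_excess g s n z) \<partial>M)
      + ennreal (exp s - 1) * (\<integral>\<^sup>+z. ennreal (tilt g s n z) \<partial>M)"
    by (simp add: nn_integral_add nn_integral_cmult)
  finally show ?thesis
    unfolding nn_integral_tilt[OF assms] .
qed

lemma mgf_add_eq_SUP_tilt_excess:
  assumes [measurable_cong]: "sets M = sets borel" and AE0: "AE z in M. 0 \<le> z" and "0 \<le> s"
  shows "mgf M (g + s) = mgf M g + (SUP n. \<integral>\<^sup>+z. ennreal (tilt_excess g s n z) \<partial>M)"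
proof -
  have SUP_eq: "(SUP n. ennreal (tilt_excess g s n z)) = ennreal (exp (g * z) * (exp (s * z) - 1))"
    if "0 \<le> z" for z
  proof (rule antisym)
    show "(SUP n. ennreal (tilt_excess g s n z)) \<le> ennreal (exp (g * z) * (exp (s * z) - 1))"
      using \<open>0 \<le> s\<close> that by (intro SUP_least ennreal_leI) (auto simp: tilt_excess_def mult_left_mono)
    have "tilt_excess g s (nat \<lceil>z\<rceil>) z = exp (g * z) * (exp (s * z) - 1)"
      using that by (simp add: tilt_excess_def min_def)
    then show "ennreal (exp (g * z) * (exp (s * z) - 1)) \<le> (SUP n. ennreal (tilt_excess g s n z))"
      by (metis SUP_upper UNIV_I)
  qed
  have "mgf M (g + s) = (\<integral>\<^sup>+z. ennreal (exp (g * z)) + (SUP n. ennreal (tilt_excess g s n z)) \<partial>M)"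
    unfolding mgf_def
  proof (rule nn_integral_cong_AE)
    show "AE z in M. ennreal (exp ((g + s) * z))
        = ennreal (exp (g * z)) + (SUP n. ennreal (tilt_excess g s n z))"
      using AE0
    proof eventually_elim
      case (elim z)
      then have "0 \<le> exp (g * z) * (exp (s * z) - 1)"
        using \<open>0 \<le> s\<close> by simp
      then show ?case
        using elim by (simp add: SUP_eq ennreal_plus[symmetric] algebra_simps exp_add[symmetric]
            del: ennreal_plus)
    qed
  qed
  also have "\<dots> = mgf M g + (\<integral>\<^sup>+z. (SUP n. ennreal (tilt_excess g s n z)) \<partial>M)"
    unfolding mgf_def by (rule nn_integral_add) measurable
  also have "(\<integral>\<^sup>+z. (SUP n. ennreal (tilt_excess g s n z)) \<partial>M)
      = (SUP n. \<integral>\<^sup>+z. ennreal (tilt_excess g s n z) \<partial>M)"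
    using \<open>0 \<le> s\<close>
    by (intro nn_integral_monotone_convergence_SUP incseq_SucI le_funI ennreal_leI
        tilt_excess_mono_index) auto
  finally show ?thesis .
qed

lemma nn_integral_convolution_tilt_excess_le:
  assumes "finite_measure F" and [measurable_cong]: "sets F = sets borel" and "0 \<le> s"
  shows "mgf F g * mgf F g + (\<integral>\<^sup>+z. ennreal (tilt_excess g s n z) \<partial>(F \<star> F))
    \<le> (mgf F g + (\<integral>\<^sup>+z. ennreal (tilt_excess g s n z) \<partial>F))
      * (mgf F g + (\<integral>\<^sup>+z. ennreal (tilt_excess g s n z) \<partial>F))"
proof -
  have "mgf F g * mgf F g + (\<integral>\<^sup>+z. ennreal (tilt_excess g s n z) \<partial>(F \<star> F))
      = (\<integral>\<^sup>+z. ennreal (tilt g s n z) \<partial>(F \<star> F))"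
    using mgf_convolution[OF assms(1,1,2,2)]
    by (simp add: nn_integral_tilt \<open>0 \<le> s\<close>)
  also have "\<dots> \<le> (\<integral>\<^sup>+z. ennreal (tilt g s n z) \<partial>F) * (\<integral>\<^sup>+z. ennreal (tilt g s n z) \<partial>F)"
    by (rule nn_integral_convolution_le_of_submult[OF assms(1,1,2,2)])
      (use \<open>0 \<le> s\<close> in \<open>auto intro: tilt_submult tilt_nonneg\<close>)
  finally show ?thesis
    by (simp add: nn_integral_tilt assms(2,3))
qed

text \<open>The tail comparison beyond \<open>x\<^sub>0\<close> passes to the integrals of the increasing function
  \<open>max 0 (\<psi> - \<psi>(x\<^sub>0))\<close>, whose superlevel sets are half-lines beyond \<open>x\<^sub>0\<close>.\<close>
lemma nn_integral_convolution_tilt_excess_ge: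
  assumes "prob_space F" and sF [measurable_cong]: "sets F = sets borel"
    and "0 < g" "0 < s" "1 \<le> n" "1 \<le> x0" "0 \<le> K"
    and tail_ge: "\<And>x. x0 \<le> x \<Longrightarrow> K * tail F x \<le> tail (F \<star> F) x"
  shows "ennreal K * (\<integral>\<^sup>+z. ennreal (tilt_excess g s n z) \<partial>F)
    \<le> ennreal (K * tilt_excess g s n x0) + (\<integral>\<^sup>+z. ennreal (tilt_excess g s n z) \<partial>(F \<star> F))"
proof -
  interpret prob_space F by fact
  have FF: "finite_measure (F \<star> F)" by (rule convolution_finite) (simp_all add: sF)
  let ?\<psi> = "tilt_excess g s n"
  define G where "G z = max 0 (?\<psi> z - ?\<psi> x0)" for z
  have G_nonneg: "0 \<le> G z" for z by (simp add: G_def)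
  have [measurable]: "G \<in> borel_measurable borel" unfolding G_def by measurable
  have "ennreal K * (\<integral>\<^sup>+z. ennreal (G z) \<partial>F) \<le> (\<integral>\<^sup>+z. ennreal (G z) \<partial>(F \<star> F))"
  proof (rule nn_integral_cmult_le_of_superlevel_sets[OF FF _ finite_measure sF _ G_nonneg])
    fix t :: real assume "0 \<le> t"
    define b where "b = max x0 ((?\<psi> x0 + t) / (g * s))"
    have "(?\<psi> x0 + t) / (g * s) \<le> b"
      by (simp add: b_def)
    then have "?\<psi> x0 + t \<le> g * b * s"
      using assms(3,4) by (simp add: pos_divide_le_eq mult_ac)
    also have "\<dots> \<le> ?\<psi> b"
      using assms(3-6) by (intro tilt_excess_ge) (auto simp: b_def)
    finally have b_ge: "?\<psi> x0 + t \<le> ?\<psi> b" .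
    obtain q where "x0 \<le> q" and q: "{z. t < G z} = {q<..}"
    proof (rule superlevel_set_eq_greaterThan[where \<psi> = ?\<psi> and c = x0 and b = b and t = t])
      show "mono ?\<psi>"
        using assms(3,4) by (intro mono_tilt_excess) auto
      show "?\<psi> a < ?\<psi> c" if "x0 \<le> a" "a < c" for a c
        using assms(3-6) that by (intro tilt_excess_strict_mono) auto
    qed (use b_ge \<open>0 \<le> t\<close> in \<open>auto simp: b_def G_def continuous_on_tilt_excess\<close>)
    have "ennreal K * emeasure F {q<..} = ennreal (K * tail F q)"
      unfolding tail_def using \<open>0 \<le> K\<close> by (simp add: emeasure_eq_measure ennreal_mult)
    also have "\<dots> \<le> ennreal (tail (F \<star> F) q)"
      using tail_ge[OF \<open>x0 \<le> q\<close>] by (rule ennreal_leI)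
    also have "\<dots> = emeasure (F \<star> F) {q<..}"
      unfolding tail_def using FF by (simp add: finite_measure.emeasure_eq_measure)
    finally show "ennreal K * emeasure F {z. t < G z} \<le> emeasure (F \<star> F) {z. t < G z}"
      unfolding q .
  qed simp_all
  also have "\<dots> \<le> (\<integral>\<^sup>+z. ennreal (?\<psi> z) \<partial>(F \<star> F))"
    using assms(4) by (intro nn_integral_mono ennreal_leI) (auto simp: G_def tilt_excess_nonneg)
  finally have G_le: "ennreal K * (\<integral>\<^sup>+z. ennreal (G z) \<partial>F) \<le> (\<integral>\<^sup>+z. ennreal (?\<psi> z) \<partial>(F \<star> F))" .
  have \<psi>x0: "0 \<le> ?\<psi> x0" using assms(4) by (simp add: tilt_excess_nonneg)
  then have "ennreal (?\<psi> z) \<le> ennreal (?\<psi> x0) + ennreal (G z)" for z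
    using G_nonneg[of z]
    by (simp add: G_def ennreal_plus[symmetric] ennreal_leI del: ennreal_plus ennreal_max_0)
  then have "(\<integral>\<^sup>+z. ennreal (?\<psi> z) \<partial>F) \<le> (\<integral>\<^sup>+z. ennreal (?\<psi> x0) + ennreal (G z) \<partial>F)"
    by (intro nn_integral_mono)
  also have "\<dots> = ennreal (?\<psi> x0) + (\<integral>\<^sup>+z. ennreal (G z) \<partial>F)"
    by (subst nn_integral_add) (auto simp: emeasure_space_1)
  finally have "ennreal K * (\<integral>\<^sup>+z. ennreal (?\<psi> z) \<partial>F)
      \<le> ennreal K * ennreal (?\<psi> x0) + ennreal K * (\<integral>\<^sup>+z. ennreal (G z) \<partial>F)"
    by (metis distrib_left mult_left_mono zero_le)
  also have "\<dots> \<le> ennreal (K * ?\<psi> x0) + (\<integral>\<^sup>+z. ennreal (?\<psi> z) \<partial>(F \<star> F))"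
    using G_le \<open>0 \<le> K\<close> \<psi>x0 by (simp add: ennreal_mult add_left_mono)
  finally show ?thesis .
qed

text \<open>\<open>\<integral> \<psi>\<^sub>n dF\<close> starts at \<open>0\<close>, increases to \<open>\<infinity>\<close> because \<open>\<phi>(g + s) = \<infinity>\<close>, and its increments
  are at most \<open>(e\<^sup>s - 1)(\<phi> + 1) \<le> 2 s (\<phi> + 1) \<le> \<delta>/4\<close> while it stays below \<open>\<delta>/4\<close>.\<close>
lemma ex_nn_integral_tilt_excess_between:
  assumes [measurable_cong]: "sets F = sets borel" and AE0: "AE z in F. 0 \<le> z"
    and \<phi>: "mgf F g = ennreal \<phi>" "0 \<le> \<phi>" and top: "mgf F (g + s) = \<top>"
    and s: "0 < s" "s \<le> 1/2" "2 * s * (\<phi> + 1) \<le> \<delta>/4" and \<delta>: "0 < \<delta>" "\<delta> \<le> 1"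
  obtains n d where "(\<integral>\<^sup>+z. ennreal (tilt_excess g s n z) \<partial>F) = ennreal d" "\<delta>/4 < d" "d \<le> \<delta>/2"
proof -
  define D where "D n = (\<integral>\<^sup>+z. ennreal (tilt_excess g s n z) \<partial>F)" for n
  have D_fin: "D n < \<top>" for n
    unfolding D_def using assms(1) s(1) \<phi> by (intro nn_integral_tilt_excess_less_top) simp_all
  have "D 0 \<le> ennreal (\<delta>/4)"
    by (simp add: D_def tilt_excess_def)
  moreover have "\<exists>N. ennreal (\<delta>/4) < D N"
  proof -
    have "ennreal \<phi> + (SUP n. D n) = \<top>"
      using mgf_add_eq_SUP_tilt_excess[OF assms(1) AE0, of s g] s(1) top \<phi>
      by (simp add: D_def)
    then have "\<forall>x<\<top>. \<exists>n. x < D n"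
      by simp
    then show ?thesis
      using ennreal_less_top by blast
  qed
  moreover have "D (Suc m) \<le> ennreal (\<delta>/2)" if "D m \<le> ennreal (\<delta>/4)" for m
  proof -
    define dm where "dm = enn2real (D m)"
    have dm: "D m = ennreal dm" "0 \<le> dm"
      using D_fin[of m] by (simp_all add: dm_def)
    with that \<delta> have "dm \<le> \<delta>/4"
      by (simp add: ennreal_le_iff)
    have "exp s - 1 \<le> 2 * s"
      using real_exp_bound_lemma[of s] s by simp
    then have "(exp s - 1) * (\<phi> + dm) \<le> 2 * s * (\<phi> + 1)"
      using s(1) dm \<open>dm \<le> \<delta>/4\<close> \<delta> \<phi>(2) by (intro mult_mono) auto
    then have "dm + (exp s - 1) * (\<phi> + dm) \<le> \<delta>/2"
      using \<open>dm \<le> \<delta>/4\<close> s(3) by linarith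
    moreover have "D (Suc m) \<le> ennreal (dm + (exp s - 1) * (\<phi> + dm))"
      using nn_integral_tilt_excess_Suc_le[OF assms(1), of s g m] s(1) dm \<phi>
      by (simp add: D_def ennreal_plus[symmetric] ennreal_mult''[symmetric] del: ennreal_plus)
    ultimately show ?thesis
      by (meson ennreal_leI order.trans)
  qed
  ultimately obtain n where "ennreal (\<delta>/4) < D n" "D n \<le> ennreal (\<delta>/2)"
    using ex_crossing[of D] by metis
  then show ?thesis
    using that[of n "enn2real (D n)"] D_fin[of n] \<delta>
    by (cases "D n") (auto simp: D_def ennreal_less_iff ennreal_le_iff)
qed

lemma nn_integral_tilt_excess_quadratic_bound:
  assumes "prob_space F" and sF: "sets F = sets borel"
    and "0 < g" "0 < s" "1 \<le> n" "1 \<le> x0" and \<phi>: "mgf F g = ennreal \<phi>" "0 \<le> \<phi>" and "0 \<le> \<epsilon>"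
    and tail_ge: "\<And>x. x0 \<le> x \<Longrightarrow> (2 * \<phi> + \<epsilon>) * tail F x \<le> tail (F \<star> F) x"
    and d: "(\<integral>\<^sup>+z. ennreal (tilt_excess g s n z) \<partial>F) = ennreal d" "0 \<le> d"
  shows "\<epsilon> * d \<le> (2 * \<phi> + \<epsilon>) * tilt_excess g s n x0 + d * d"
proof -
  define K where "K = 2 * \<phi> + \<epsilon>"
  define E where "E = (\<integral>\<^sup>+z. ennreal (tilt_excess g s n z) \<partial>(F \<star> F))"
  have "ennreal (\<phi> * \<phi>) + E \<le> ennreal ((\<phi> + d) * (\<phi> + d))"
    using nn_integral_convolution_tilt_excess_le[OF prob_space.finite_measure[OF assms(1)] sF, of s g n]
      \<open>0 < s\<close> \<phi> d
    by (simp add: E_def ennreal_mult ennreal_plus[symmetric] del: ennreal_plus)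
  moreover from this have "E < \<top>"
    by (metis ennreal_add_eq_top ennreal_less_top top.not_eq_extremum top_unique)
  then obtain e where e: "E = ennreal e" "0 \<le> e"
    by (cases E) auto
  ultimately have "\<phi> * \<phi> + e \<le> (\<phi> + d) * (\<phi> + d)"
    using \<phi>(2) d(2) by (simp add: ennreal_plus[symmetric] ennreal_le_iff del: ennreal_plus)
  moreover have "ennreal (K * d) \<le> ennreal (K * tilt_excess g s n x0 + e)"
    using nn_integral_convolution_tilt_excess_ge[OF assms(1-6), of K] tail_ge \<phi>(2) \<open>0 \<le> \<epsilon>\<close> d e
      tilt_excess_nonneg[of s g n x0] \<open>0 < s\<close>
    by (simp add: K_def E_def ennreal_mult[symmetric] ennreal_plus[symmetric] del: ennreal_plus)
  then have "K * d \<le> K * tilt_excess g s n x0 + e"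
    using e(2) tilt_excess_nonneg[of s g n x0] \<open>0 < s\<close> \<phi>(2) \<open>0 \<le> \<epsilon>\<close>
    by (simp add: K_def ennreal_plus[symmetric] ennreal_le_iff del: ennreal_plus)
  ultimately show ?thesis
    by (simp add: K_def algebra_simps)
qed

text \<open>Choosing \<open>s\<close> small makes the first term of the quadratic bound at most \<open>\<epsilon>\<^sup>2/16\<close>, which is
  incompatible with \<open>\<epsilon>/4 < d \<le> \<epsilon>/2\<close>.\<close>
lemma not_eventually_convolution_tail_ge:
  assumes "prob_space F" and sF: "sets F = sets borel" and AE0: "AE z in F. 0 \<le> z" and "0 < g"
    and fin: "mgf F g < \<top>" and top: "\<And>s. 0 < s \<Longrightarrow> mgf F (g + s) = \<top>" and "0 < \<delta>"
  shows "\<not> eventually (\<lambda>x. (2 * enn2real (mgf F g) + \<delta>) * tail F x \<le> tail (F \<star> F) x) at_top"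
proof
  define \<phi> where "\<phi> = enn2real (mgf F g)"
  have \<phi>: "mgf F g = ennreal \<phi>" "0 \<le> \<phi>"
    using fin by (simp_all add: \<phi>_def)
  assume "eventually (\<lambda>x. (2 * enn2real (mgf F g) + \<delta>) * tail F x \<le> tail (F \<star> F) x) at_top"
  then obtain x1 where x1: "\<And>x. x1 \<le> x \<Longrightarrow> (2 * \<phi> + \<delta>) * tail F x \<le> tail (F \<star> F) x"
    unfolding eventually_at_top_linorder \<phi>_def by auto
  define x0 where "x0 = max x1 1"
  define \<epsilon> where "\<epsilon> = min \<delta> 1"
  define K where "K = 2 * \<phi> + \<epsilon>"
  have \<epsilon>: "0 < \<epsilon>" "\<epsilon> \<le> 1" and "1 \<le> x0" and "0 < K"
    using \<open>0 < \<delta>\<close> \<phi>(2) by (auto simp: \<epsilon>_def x0_def K_def)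
  have tail_ge: "(2 * \<phi> + \<epsilon>) * tail F x \<le> tail (F \<star> F) x" if "x0 \<le> x" for x
  proof -
    have "(2 * \<phi> + \<epsilon>) * tail F x \<le> (2 * \<phi> + \<delta>) * tail F x"
      by (intro mult_right_mono) (auto simp: \<epsilon>_def tail_def)
    also have "\<dots> \<le> tail (F \<star> F) x"
      using that by (intro x1) (simp add: x0_def)
    finally show ?thesis .
  qed
  define s where "s = min (1 / (2 * x0)) (min (\<epsilon> / (8 * (\<phi> + 1))) (\<epsilon>\<^sup>2 / (32 * K * exp (g * x0) * x0)))"
  have "0 < s"
    using \<epsilon> \<open>1 \<le> x0\<close> \<open>0 < K\<close> \<phi>(2) by (simp add: s_def)
  have "s \<le> 1 / (2 * x0)" "s \<le> \<epsilon> / (8 * (\<phi> + 1))" "s \<le> \<epsilon>\<^sup>2 / (32 * K * exp (g * x0) * x0)"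
    by (simp_all add: s_def)
  then have "s * x0 \<le> 1/2" "2 * s * (\<phi> + 1) \<le> \<epsilon>/4" "s * (K * exp (g * x0) * x0) \<le> \<epsilon>\<^sup>2/32"
    using \<open>1 \<le> x0\<close> \<open>0 < K\<close> \<phi>(2) by (simp_all add: field_simps)
  moreover have "s \<le> s * x0"
    using \<open>0 < s\<close> \<open>1 \<le> x0\<close> by simp
  ultimately have "s \<le> 1/2"
    by linarith
  with \<open>2 * s * (\<phi> + 1) \<le> \<epsilon>/4\<close> obtain n d where d: "(\<integral>\<^sup>+z. ennreal (tilt_excess g s n z) \<partial>F) = ennreal d"
    and "\<epsilon>/4 < d" "d \<le> \<epsilon>/2"
    using ex_nn_integral_tilt_excess_between[OF sF AE0 \<phi> top[OF \<open>0 < s\<close>] \<open>0 < s\<close> _ _ \<epsilon>] by blast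
  have "1 \<le> n"
  proof (rule ccontr)
    assume "\<not> 1 \<le> n"
    then have "n = 0"
      by simp
    then have "ennreal d = 0"
      using d by (simp add: tilt_excess_def)
    with \<open>\<epsilon>/4 < d\<close> \<epsilon> show False
      by simp
  qed
  have "exp (s * x0) - 1 \<le> 2 * (s * x0)"
    using real_exp_bound_lemma[of "s * x0"] \<open>0 < s\<close> \<open>1 \<le> x0\<close> \<open>s * x0 \<le> 1/2\<close> by simp
  moreover have "exp (s * min (max x0 0) (real n)) \<le> exp (s * x0)"
    using \<open>0 < s\<close> \<open>1 \<le> x0\<close> by (auto intro!: mult_left_mono)
  ultimately have "exp (s * min (max x0 0) (real n)) - 1 \<le> 2 * (s * x0)"
    by linarith
  then have "tilt_excess g s n x0 \<le> exp (g * x0) * (2 * (s * x0))"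
    unfolding tilt_excess_def by (rule mult_left_mono) simp
  then have "K * tilt_excess g s n x0 \<le> K * (exp (g * x0) * (2 * (s * x0)))"
    using \<open>0 < K\<close> by (intro mult_left_mono) auto
  also have "\<dots> = 2 * (s * (K * exp (g * x0) * x0))"
    by (simp add: mult_ac)
  also have "\<dots> \<le> \<epsilon>\<^sup>2/16"
    using \<open>s * (K * exp (g * x0) * x0) \<le> \<epsilon>\<^sup>2/32\<close> by simp
  finally have "\<epsilon> * d \<le> \<epsilon>\<^sup>2/16 + d * d"
    using nn_integral_tilt_excess_quadratic_bound[OF assms(1) sF \<open>0 < g\<close> \<open>0 < s\<close> \<open>1 \<le> n\<close>
        \<open>1 \<le> x0\<close> \<phi> _ tail_ge d] \<epsilon> \<open>\<epsilon>/4 < d\<close>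
    by (simp add: K_def)
  moreover have "2 * (d * d) \<le> \<epsilon> * d"
    using mult_left_mono[OF \<open>d \<le> \<epsilon>/2\<close>, of d] \<open>\<epsilon>/4 < d\<close> \<epsilon> by (simp add: mult.commute)
  moreover have "\<epsilon> * \<epsilon> < 4 * (\<epsilon> * d)"
    using mult_strict_left_mono[OF \<open>\<epsilon>/4 < d\<close> \<open>0 < \<epsilon>\<close>] by simp
  moreover have "0 \<le> \<epsilon> * \<epsilon>"
    by simp
  ultimately show False
    unfolding power2_eq_square by linarith
qed

lemma Liminf_convolution_tail_ratio_le:
  assumes "prob_space F" and sF: "sets F = sets borel" and AE0: "AE x in F. 0 \<le> x"
    and pos: "\<And>x. 0 < tail F x" and "0 < gamma_hat F"
  shows "Liminf at_top (\<lambda>x. ereal (tail (F \<star> F) x / tail F x)) \<le> 2 * enn2ereal (mgf_hat F)"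
proof (cases "mgf_hat F = \<top>")
  case False
  then have "gamma_hat F \<noteq> \<infinity>"
    using mgf_hat_eq_top_if_gamma_hat_infinite[OF prob_space.finite_measure[OF assms(1)] sF pos]
    by blast
  with \<open>0 < gamma_hat F\<close> obtain g where g: "gamma_hat F = ereal g"
    by (cases "gamma_hat F") auto
  with \<open>0 < gamma_hat F\<close> have "0 < g" by simp
  have "mgf F g \<le> mgf_hat F"
    by (rule mgf_gamma_hat_le_mgf_hat[OF sF g])
  moreover have "mgf_hat F < \<top>"
    using False by (simp add: top.not_eq_extremum)
  ultimately have "mgf F g < \<top>"
    by (rule order.strict_trans1)
  have top: "mgf F (g + s) = \<top>" if "0 < s" for s
  proof (rule ccontr)
    assume "mgf F (g + s) \<noteq> \<top>"
    then have "ereal (g + s) \<le> gamma_hat F"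
      by (intro ereal_le_gamma_hat) (simp add: top.not_eq_extremum)
    with g that show False
      by simp
  qed
  define \<phi> where "\<phi> = enn2real (mgf F g)"
  have \<phi>: "mgf F g = ennreal \<phi>" "0 \<le> \<phi>"
    using \<open>mgf F g < \<top>\<close> by (simp_all add: \<phi>_def)
  have "ereal (2 * \<phi>) = 2 * enn2ereal (mgf F g)"
    using \<phi> by simp
  also have "\<dots> \<le> 2 * enn2ereal (mgf_hat F)"
    using \<open>mgf F g \<le> mgf_hat F\<close> by (intro ereal_mult_left_mono) (simp_all add: less_eq_ennreal.rep_eq[symmetric])
  finally have \<phi>_le: "ereal (2 * \<phi>) \<le> 2 * enn2ereal (mgf_hat F)" .
  show ?thesis
  proof (rule ccontr)
    assume "\<not> ?thesis"
    with \<phi>_le have "ereal (2 * \<phi>) < Liminf at_top (\<lambda>x. ereal (tail (F \<star> F) x / tail F x))"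
      by (simp add: not_le order.strict_trans1)
    then obtain z where "ereal (2 * \<phi>) < ereal z"
      and "ereal z < Liminf at_top (\<lambda>x. ereal (tail (F \<star> F) x / tail F x))"
      using ereal_dense2 by blast
    then have "eventually (\<lambda>x. ereal z < ereal (tail (F \<star> F) x / tail F x)) at_top"
      by (intro less_LiminfD)
    then have "eventually (\<lambda>x. (2 * \<phi> + (z - 2 * \<phi>)) * tail F x \<le> tail (F \<star> F) x) at_top"
    proof eventually_elim
      case (elim x)
      then have "z < tail (F \<star> F) x / tail F x"
        by simp
      then show ?case
        using pos[of x] by (simp add: pos_less_divide_eq less_imp_le)
    qed
    moreover have "0 < z - 2 * \<phi>"
      using \<open>ereal (2 * \<phi>) < ereal z\<close> by simp
    ultimately show False
      using not_eventually_convolution_tail_ge[OF assms(1) sF AE0 \<open>0 < g\<close> \<open>mgf F g < \<top>\<close> top,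
          of "z - 2 * \<phi>"]
      unfolding \<phi>_def by blast
  qed
qed simp

theorem theorem2:
  fixes F :: "real measure"
  assumes "prob_space F"
    and "sets F = sets borel"
    and "AE x in F. 0 \<le> x"
    and "\<And>x. tail F x > 0"
    and "gamma_hat F > 0"
    and "\<And>y. y > 0 \<Longrightarrow>
           Liminf at_top (\<lambda>x. ereal (tail F (x - y) / tail F x)) \<ge> exp_ereal (gamma_hat F) y"
  shows "Liminf at_top (\<lambda>x. ereal (tail (F \<star> F) x / tail F x))
           = 2 * enn2ereal (mgf_hat F)"
proof (rule antisym)
  show "Liminf at_top (\<lambda>x. ereal (tail (F \<star> F) x / tail F x)) \<le> 2 * enn2ereal (mgf_hat F)"
    using assms(1-5) by (rule Liminf_convolution_tail_ratio_le)
  show "2 * enn2ereal (mgf_hat F) \<le> Liminf at_top (\<lambda>x. ereal (tail (F \<star> F) x / tail F x))"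
    using prob_space.finite_measure[OF assms(1)] assms(2-4,6)
    by (rule Liminf_convolution_tail_ratio_ge)
qed

end
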